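(* Let $k\ge1$ and let $e_1,\dots,e_k,f_1,\dots,f_k$ be integers such that $e_1,e_2+1,\dots,e_k+k-1$ are distinct nonnegative integers and $f_1,f_2+1,\dots,f_k+k-1$ are distinct elements of $\{0,1,\dots,2k-1\}$. Let $c_1<c_2<\cdots<c_k$ be the elements of the complement $\{0,1,\dots,2k-1\}\setminus\{f_1,f_2+1,\dots,f_k+k-1\}$. Let $D$ be the $2k\times 2k$ determinant with entries, for $1\le i\le k$, $1\le j\le 2k$, $$D_{ij}=\Gamma(2k-i-j+2-e_i)^{-1},\qquad D_{k+i,j}=(-1)^{i+j-1}\Gamma(2k-i-j+2-f_i)^{-1}$$ (with $1/\Gamma(m)=0$ for $m\in\{0,-1,-2,\dots\}$). Then $$D=\operatorname{sgn}(f)\Bigl(\prod_{l=0}^{k-1}\frac{(e_{l+1}+l)!\,(f_{l+1}+l)!}{l!\,(k+l)!}\,2^{c_{l+1}-e_{l+1}-l}\Bigr)\det\Bigl(\binom{c_j}{e_i+i-1}\Bigr)_{1\le i,j\le k},$$ where $\operatorname{sgn}(f)$ is $(-1)$ raised to the number of transpositions needed to sort $f_1+1,f_2+2,\dots,f_k+k$ into increasing order. *)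

theory Defs
  imports "HOL-Analysis.Gamma_Function" "HOL-Combinatorics.Permutations"
    "Jordan_Normal_Form.Determinant"
begin

definition sort_perm :: "(nat \<Rightarrow> int) \<Rightarrow> nat \<Rightarrow> (nat \<Rightarrow> nat)" where
  "sort_perm g k = (THE p. p permutes {1..k} \<and>
      (\<forall>i\<in>{1..k}. \<forall>j\<in>{1..k}. i < j \<longrightarrow> g (p i) < g (p j)))"

text \<open>The 2k x 2k matrix D (1-based indices i, j of the paper correspond to a+1, b+1).\<close>
definition Dmat :: "nat \<Rightarrow> (nat \<Rightarrow> int) \<Rightarrow> (nat \<Rightarrow> int) \<Rightarrow> real mat" where
  "Dmat k e f = mat (2*k) (2*k) (\<lambda>(a,b).
     (let j = int b + 1 in
      if a < k then
        (let i = int a + 1 in rGamma (of_int (2*int k - i - j + 2 - e (a+1))))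
      else
        (let i = int a - int k + 1 in
          (-1) powi (i + j - 1) * rGamma (of_int (2*int k - i - j + 2 - f (a - k + 1))))))"

end

(*
  Right-multiplying D by the lower unitriangular matrix X = (1/(s-t)!) of size 2k does not change
  the determinant, and the binomial theorem evaluates every row of DX.  With a = e_i + i - 1 the
  i-th row of the first block becomes t |-> 2^(C-a)/(C-a)! for C = 2k-1-t (zero if C < a), while
  by the alternating binomial sum the i-th row of the second block becomes a signed unit vector
  at column 2k-1-(f_i+i-1).  Expanding along these k unit rows leaves the minor on the
  complementary columns 2k-1-c_j, whose entries factor as (a!/2^a) (2^C/C!) binom(C,a).  The
  factorials (f_i+i-1)! and c_j! together are exactly 0!, ..., (2k-1)!, which turns the scalings
  into the stated prefactor, and the signs of the expansion reduce to sgn(f).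
*)
theory Submission
  imports Defs
begin

section \<open>Sorting permutations\<close>

lemma strict_mono_on_eq_if_image_eq:
  fixes h1 h2 :: "'a::linorder \<Rightarrow> 'b::linorder"
  assumes "finite S" "strict_mono_on S h1" "strict_mono_on S h2" "h1 ` S = h2 ` S" "x \<in> S"
  shows "h1 x = h2 x"
proof -
  let ?xs = "sorted_list_of_set S"
  have enum: "map h ?xs = sorted_list_of_set (h ` S)" if "strict_mono_on S h" for h
  proof -
    have "sorted_wrt (<) (map h ?xs)"
      unfolding sorted_wrt_map
      by (rule sorted_wrt_mono_rel[OF _ strict_sorted_list_of_set])
        (use that \<open>finite S\<close> in \<open>auto dest: strict_mono_onD\<close>)
    then show ?thesis
      using \<open>finite S\<close> by (metis list.set_map set_sorted_list_of_set
          sorted_list_of_set.idem_if_sorted_distinct strict_sorted_iff)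
  qed
  have "map h1 ?xs = map h2 ?xs" using enum[OF assms(2)] enum[OF assms(3)] assms(4) by metis
  then show ?thesis using assms(1,5) by (simp add: map_eq_conv)
qed

lemma sorting_permutation_exists:
  fixes g :: "nat \<Rightarrow> 'a::linorder"
  assumes "inj_on g {0..<n}"
  obtains p where "p permutes {0..<n}" "strict_mono_on {0..<n} (g \<circ> p)"
proof -
  let ?xs = "map g [0..<n]"
  obtain p where p: "p permutes {..<n}" "permute_list p ?xs = sort ?xs"
    using mset_eq_permutation[of "sort ?xs" ?xs] by auto
  have gp: "g (p i) = sort ?xs ! i" if "i < n" for i
    using permute_list_nth[of p ?xs i] p permutes_in_image[OF p(1), of i] that by simp
  have "sorted_wrt (<) (sort ?xs)"
    using assms by (simp add: strict_sorted_iff distinct_map)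
  then have "strict_mono_on {0..<n} (g \<circ> p)"
    by (auto intro!: strict_mono_onI simp: gp sorted_wrt_iff_nth_less)
  moreover have "p permutes {0..<n}" using p(1) by (simp add: atLeast0LessThan)
  ultimately show ?thesis using that by blast
qed

lemma sort_perm_eqI:
  assumes p: "p permutes {1..k}" and sorts: "strict_mono_on {1..k} (g \<circ> p)"
  shows "sort_perm g k = p"
  unfolding sort_perm_def
proof (rule the_equality)
  show "p permutes {1..k} \<and> (\<forall>i\<in>{1..k}. \<forall>j\<in>{1..k}. i < j \<longrightarrow> g (p i) < g (p j))"
    using p sorts by (auto dest: strict_mono_onD)
next
  fix q assume q: "q permutes {1..k} \<and> (\<forall>i\<in>{1..k}. \<forall>j\<in>{1..k}. i < j \<longrightarrow> g (q i) < g (q j))"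
  have "inj_on g (p ` {1..k})"
    using inj_on_imageI[OF strict_mono_on_imp_inj_on[OF sorts]] .
  then have inj: "inj_on g {1..k}" using permutes_image[OF p] by simp
  have "(g \<circ> q) x = (g \<circ> p) x" if "x \<in> {1..k}" for x
  proof (rule strict_mono_on_eq_if_image_eq[OF _ _ sorts _ that])
    show "strict_mono_on {1..k} (g \<circ> q)" using q by (auto intro!: strict_mono_onI)
    show "(g \<circ> q) ` {1..k} = (g \<circ> p) ` {1..k}" using permutes_image p q by (metis image_comp)
  qed simp
  then have "q x = p x" if "x \<in> {1..k}" for x
    by (metis comp_apply inj inj_onD permutes_in_image[OF p] permutes_in_image q that)
  then show "q = p" using p q by (metis permutes_not_in ext)
qed

definition reverse_perm :: "nat \<Rightarrow> nat \<Rightarrow> nat" where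
  "reverse_perm n j = (if j < n then n - 1 - j else j)"

lemma reverse_perm_permutes: "reverse_perm n permutes {0..<n}"
proof (rule bij_imp_permutes)
  show "bij_betw (reverse_perm n) {0..<n} {0..<n}"
    by (rule bij_betwI[where g = "reverse_perm n"]) (auto simp: reverse_perm_def)
qed (simp add: reverse_perm_def)

section \<open>Determinants with unit rows\<close>

lemma det_permute_cols:
  assumes A: "A \<in> carrier_mat n n" and p: "p permutes {0..<n}"
  shows "det (mat n n (\<lambda>(i,j). A $$ (i, p j))) = signof p * det A"
proof -
  have pin: "p j < n" if "j < n" for j
    using p that by (meson atLeastLessThan_iff permutes_in_image zero_le)
  have "mat n n (\<lambda>(i,j). A $$ (i, p j)) = transpose_mat (mat n n (\<lambda>(i,j). transpose_mat A $$ (p i, j)))"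
    by (rule eq_matI) (use A pin in auto)
  then have "det (mat n n (\<lambda>(i,j). A $$ (i, p j))) = det (mat n n (\<lambda>(i,j). transpose_mat A $$ (p i, j)))"
    by (simp add: det_transpose[of _ n])
  also have "\<dots> = signof p * det (transpose_mat A)"
    by (rule det_permute_rows[OF _ p]) (use A in simp)
  also have "det (transpose_mat A) = det A" by (rule det_transpose[OF A])
  finally show ?thesis .
qed

lemma det_scale_rows_cols:
  fixes B :: "'a::comm_ring_1 mat"
  assumes B: "B \<in> carrier_mat n n"
  shows "det (mat n n (\<lambda>(i,j). u i * v j * B $$ (i,j))) = (\<Prod>i<n. u i) * (\<Prod>j<n. v j) * det B"
proof -
  have "signof p * (\<Prod>i=0..<n. mat n n (\<lambda>(i,j). u i * v j * B $$ (i,j)) $$ (i, p i)) =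
      (\<Prod>i<n. u i) * (\<Prod>j<n. v j) * (signof p * (\<Prod>i=0..<n. B $$ (i, p i)))"
    if p: "p permutes {0..<n}" for p
  proof -
    have pin: "p i < n" if "i < n" for i
      using that p by (meson atLeastLessThan_iff permutes_in_image zero_le)
    have "(\<Prod>i=0..<n. mat n n (\<lambda>(i,j). u i * v j * B $$ (i,j)) $$ (i, p i)) =
        (\<Prod>i=0..<n. u i) * (\<Prod>i=0..<n. v (p i)) * (\<Prod>i=0..<n. B $$ (i, p i))"
      by (simp add: pin prod.distrib)
    also have "(\<Prod>i=0..<n. v (p i)) = (\<Prod>j=0..<n. v j)"
      using prod.permute[OF p, of v] by (simp add: comp_def)
    finally show ?thesis by (simp add: atLeast0LessThan ac_simps)
  qed
  then show ?thesis
    unfolding det_def'[OF B] det_def'[OF mat_carrier] sum_distrib_left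
    by (intro sum.cong) simp_all
qed

lemma image_close_gap:
  fixes \<gamma> :: "nat \<Rightarrow> nat"
  assumes \<gamma>: "\<gamma> ` P = {0..<Suc n} - insert b B" and B: "\<forall>x\<in>B. x < b" and b: "b < Suc n"
  shows "(\<lambda>j. if \<gamma> j < b then \<gamma> j else \<gamma> j - 1) ` P = {0..<n} - B"
proof (intro equalityI subsetI)
  fix x assume "x \<in> (\<lambda>j. if \<gamma> j < b then \<gamma> j else \<gamma> j - 1) ` P"
  then obtain j where j: "x = (if \<gamma> j < b then \<gamma> j else \<gamma> j - 1)" "j \<in> P" by (rule imageE)
  have "\<gamma> j \<in> {0..<Suc n} - insert b B" using \<gamma> j(2) by blast
  then have "\<gamma> j < Suc n" "\<gamma> j \<noteq> b" "\<gamma> j \<notin> B" by simp_all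
  moreover have "x \<notin> B" if "b \<le> x" using B that by force
  ultimately show "x \<in> {0..<n} - B" using j(1) b by (cases "\<gamma> j < b") simp_all
next
  fix y assume y: "y \<in> {0..<n} - B"
  show "y \<in> (\<lambda>j. if \<gamma> j < b then \<gamma> j else \<gamma> j - 1) ` P"
  proof (cases "y < b")
    case True
    then have "y \<in> \<gamma> ` P" using y b unfolding \<gamma> by simp
    then obtain j where "y = \<gamma> j" "j \<in> P" by (rule imageE)
    with True show ?thesis by (auto intro!: image_eqI[of _ _ j])
  next
    case False
    then have "Suc y \<in> \<gamma> ` P" using y B unfolding \<gamma> by (auto simp del: insert_iff)
    then obtain j where "Suc y = \<gamma> j" "j \<in> P" by (rule imageE)
    with False show ?thesis by (auto intro!: image_eqI[of _ _ j])
  qed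
qed

lemma det_unit_last_row:
  fixes A :: "'a::comm_ring_1 mat"
  assumes A: "A \<in> carrier_mat (Suc n) (Suc n)" and b: "b < Suc n"
    and last_row: "\<And>j. j < Suc n \<Longrightarrow> A $$ (n, j) = (if j = b then x else 0)"
  shows "det A = x * (-1)^(n + b) * det (mat_delete A n b)"
proof -
  have "det A = (\<Sum>j<Suc n. A $$ (n,j) * cofactor A n j)"
    by (rule laplace_expansion_row[OF A]) simp
  also have "\<dots> = (\<Sum>j<Suc n. if j = b then x * cofactor A n b else 0)"
    using last_row by (intro sum.cong) auto
  also have "\<dots> = x * cofactor A n b"
    using b by simp
  finally show ?thesis by (simp add: cofactor_def)
qed

lemma det_unit_rows:
  fixes A :: "'a::comm_ring_1 mat" and \<beta> \<gamma> :: "nat \<Rightarrow> nat"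
  assumes "A \<in> carrier_mat (p+q) (p+q)"
    and "strict_mono_on {0..<q} \<beta>" and "\<beta> ` {0..<q} \<subseteq> {0..<p+q}"
    and "\<And>i j. i < q \<Longrightarrow> j < p+q \<Longrightarrow> A $$ (p+i, j) = (if j = \<beta> i then s i else 0)"
    and "strict_mono_on {0..<p} \<gamma>" and "\<gamma> ` {0..<p} = {0..<p+q} - \<beta> ` {0..<q}"
  shows "det A = (-1)^(\<Sum>i<q. p + i + \<beta> i) * (\<Prod>i<q. s i) * det (mat p p (\<lambda>(r,j). A $$ (r, \<gamma> j)))"
  using assms
proof (induction q arbitrary: A \<gamma>)
  case 0
  have "\<gamma> j = j" if "j < p" for j
    using strict_mono_on_eq_if_image_eq[OF _ "0.prems"(5) strict_mono_on_ident] "0.prems"(6) that by simp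
  then have "A = mat p p (\<lambda>(r,j). A $$ (r, \<gamma> j))"
    using "0.prems"(1) by (auto intro!: eq_matI)
  then show ?case by simp
next
  case (Suc q)
  define n where "n = p + q"
  define b where "b = \<beta> q"
  define skip where "skip j = (if j < b then j else Suc j)" for j
  define \<gamma>' where "\<gamma>' j = (if \<gamma> j < b then \<gamma> j else \<gamma> j - 1)" for j
  have A: "A \<in> carrier_mat (Suc n) (Suc n)" using Suc.prems(1) by (simp add: n_def)
  have b: "b < Suc n" using Suc.prems(3) by (force simp: b_def n_def)
  have \<beta>_less_b: "\<beta> i < b" if "i < q" for i
    using Suc.prems(2) that by (auto simp: strict_mono_on_def b_def)
  have \<gamma>_ne_b: "\<gamma> j \<noteq> b" and \<gamma>_less: "\<gamma> j < Suc n" if "j < p" for j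
  proof -
    have "\<gamma> j \<in> \<gamma> ` {0..<p}" using that by simp
    then have "\<gamma> j \<in> {0..<p + Suc q} - \<beta> ` {0..<Suc q}" by (simp only: Suc.prems(6))
    then show "\<gamma> j \<noteq> b" "\<gamma> j < Suc n" by (auto simp: b_def n_def)
  qed
  have delete: "mat_delete A n b $$ (r, j) = A $$ (r, skip j)" if "r < n" "j < n" for r j
    using that A by (simp add: mat_delete_def skip_def)
  have "det A = s q * (-1)^(p + q + \<beta> q) * det (mat_delete A n b)"
    using det_unit_last_row[OF A b, of "s q"] Suc.prems(4)[of q] by (simp add: n_def b_def)
  also have "det (mat_delete A n b) = (-1)^(\<Sum>i<q. p + i + \<beta> i) * (\<Prod>i<q. s i) *
      det (mat p p (\<lambda>(r,j). mat_delete A n b $$ (r, \<gamma>' j)))"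
  proof (rule Suc.IH)
    show "mat_delete A n b \<in> carrier_mat (p + q) (p + q)"
      using mat_delete_carrier[OF A] by (simp add: n_def)
    show "strict_mono_on {0..<q} \<beta>" using Suc.prems(2) by (auto simp: strict_mono_on_def)
    show "\<beta> ` {0..<q} \<subseteq> {0..<p + q}" using \<beta>_less_b b by (force simp: n_def)
    show "mat_delete A n b $$ (p + i, j) = (if j = \<beta> i then s i else 0)" if "i < q" "j < p + q" for i j
      using that delete Suc.prems(4)[of i "skip j"] \<beta>_less_b[OF that(1)]
      by (auto simp: n_def skip_def)
    show "strict_mono_on {0..<p} \<gamma>'"
      using Suc.prems(5) \<gamma>_ne_b by (fastforce simp: strict_mono_on_def \<gamma>'_def)
    have "\<gamma> ` {0..<p} = {0..<Suc n} - insert b (\<beta> ` {0..<q})"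
      using Suc.prems(6) by (simp add: n_def b_def atLeast0_lessThan_Suc image_insert)
    then show "\<gamma>' ` {0..<p} = {0..<p + q} - \<beta> ` {0..<q}"
      unfolding \<gamma>'_def n_def[symmetric] using \<beta>_less_b b by (intro image_close_gap) auto
  qed
  also have "mat p p (\<lambda>(r,j). mat_delete A n b $$ (r, \<gamma>' j)) = mat p p (\<lambda>(r,j). A $$ (r, \<gamma> j))"
  proof -
    have "skip (\<gamma>' j) = \<gamma> j" "\<gamma>' j < n" if "j < p" for j
      using \<gamma>_ne_b[OF that] \<gamma>_less[OF that] b by (auto simp: skip_def \<gamma>'_def)
    then show ?thesis using delete by (auto intro!: eq_matI simp: n_def)
  qed
  finally show ?case by (simp add: power_add ac_simps)
qed

section \<open>Binomial sums of reciprocal factorials\<close>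

lemma sum_rGamma_convolution:
  fixes w :: "nat \<Rightarrow> real" and u :: int
  assumes "u \<le> int K" and "N = nat (u - 1 - int t)"
  shows "(\<Sum>s<K. w s * rGamma (of_int (u - int s)) * rGamma (of_int (int s - int t + 1))) =
    (if int t < u then \<Sum>j\<le>N. w (t+j) * (inverse (fact (N - j)) * inverse (fact j)) else 0)"
proof -
  define F where "F s = w s * rGamma (of_int (u - int s)) * rGamma (of_int (int s - int t + 1))" for s
  have F: "F s = (if t \<le> s \<and> int s < u then w s * (inverse (fact (N - (s - t))) * inverse (fact (s - t))) else 0)" for s
  proof -
    have "nat (u - int s - 1) = N - (s - t)" "nat (int s - int t) = s - t" if "t \<le> s"
      using assms(2) that by simp_all
    then show ?thesis unfolding F_def rGamma_of_int by auto
  qed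
  show ?thesis
  proof (cases "int t < u")
    case True
    have "F s = 0" if "s \<notin> (+) t ` {..N}" for s
    proof -
      have "\<not> (t \<le> s \<and> int s < u)"
      proof
        assume "t \<le> s \<and> int s < u"
        then have "s = t + (s - t)" "s - t \<le> N" using assms(2) by auto
        then show False using that by blast
      qed
      then show ?thesis by (auto simp: F)
    qed
    then have "(\<Sum>s<K. F s) = (\<Sum>s\<in>(+) t ` {..N}. F s)"
      using True assms by (intro sum.mono_neutral_right) auto
    also have "\<dots> = (\<Sum>j\<le>N. F (t+j))" by (simp add: sum.reindex)
    also have "\<dots> = (\<Sum>j\<le>N. w (t+j) * (inverse (fact (N - j)) * inverse (fact j)))"
      using True assms(2) by (intro sum.cong) (auto simp: F)
    finally show ?thesis using True by (simp add: F_def)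
  next
    case False
    then have "(\<Sum>s<K. F s) = 0" by (intro sum.neutral) (auto simp: F)
    then show ?thesis using False by (simp add: F_def)
  qed
qed

lemma sum_inverse_fact_binomial:
  "(\<Sum>j\<le>N. inverse (fact (N - j)) * inverse (fact j) :: real) = 2 ^ N / fact N"
proof -
  have "(\<Sum>j\<le>N. inverse (fact (N - j)) * inverse (fact j) :: real) = (\<Sum>j\<le>N. real (N choose j)) / fact N"
    unfolding sum_divide_distrib by (intro sum.cong) (auto simp: binomial_fact field_simps)
  also have "(\<Sum>j\<le>N. real (N choose j)) = 2 ^ N"
    using choose_row_sum[of N] by (metis of_nat_numeral of_nat_power of_nat_sum)
  finally show ?thesis .
qed

lemma sum_alternating_inverse_fact_binomial:
  "(\<Sum>j\<le>N. (-1)^j * (inverse (fact (N - j)) * inverse (fact j)) :: real) = (if N = 0 then 1 else 0)"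
proof -
  have "(\<Sum>j\<le>N. (-1)^j * (inverse (fact (N - j)) * inverse (fact j)) :: real) =
      (\<Sum>j\<le>N. (-1)^j * real (N choose j)) / fact N"
    unfolding sum_divide_distrib by (intro sum.cong) (auto simp: binomial_fact field_simps)
  then show ?thesis
    using choose_alternating_sum[of N, where ?'a = real] by auto
qed

lemma power_div_fact_diff_eq_binomial:
  fixes x :: real
  assumes "x \<noteq> 0"
  shows "(if a \<le> C then x ^ (C - a) / fact (C - a) else 0) = fact a / x ^ a * (x ^ C / fact C) * real (C choose a)"
proof (cases "a \<le> C")
  case True
  then have "x ^ C = x ^ a * x ^ (C - a)" by (simp flip: power_add)
  then show ?thesis using True assms by (simp add: binomial_fact field_simps)
qed simp

section \<open>Multiplication by the Toeplitz matrix of reciprocal factorials\<close>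

definition rGamma_toeplitz_mat :: "nat \<Rightarrow> real mat" where
  "rGamma_toeplitz_mat n = mat n n (\<lambda>(s,t). rGamma (of_int (int s - int t + 1)))"

lemma rGamma_toeplitz_mat_carrier: "rGamma_toeplitz_mat n \<in> carrier_mat n n"
  by (simp add: rGamma_toeplitz_mat_def)

lemma rGamma_toeplitz_mat_index:
  assumes "s < n" "t < n"
  shows "rGamma_toeplitz_mat n $$ (s,t) = (if t \<le> s then inverse (fact (s - t)) else 0)"
  using assms rGamma_of_int[of "int s - int t + 1"] by (auto simp: rGamma_toeplitz_mat_def nat_diff_distrib)

lemma det_rGamma_toeplitz_mat: "det (rGamma_toeplitz_mat n) = 1"
proof -
  have "det (rGamma_toeplitz_mat n) = prod_list (diag_mat (rGamma_toeplitz_mat n))"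
    by (rule det_lower_triangular[OF _ rGamma_toeplitz_mat_carrier]) (simp add: rGamma_toeplitz_mat_index)
  also have "diag_mat (rGamma_toeplitz_mat n) = replicate n 1"
    using rGamma_toeplitz_mat_carrier[of n]
    by (intro nth_equalityI) (auto simp: diag_mat_def rGamma_toeplitz_mat_index)
  finally show ?thesis by simp
qed

lemma Dmat_carrier: "Dmat k e f \<in> carrier_mat (2*k) (2*k)"
  by (simp add: Dmat_def)

lemma Dmat_mult_toeplitz_entry:
  assumes "r < 2*k" "t < 2*k"
  shows "(Dmat k e f * rGamma_toeplitz_mat (2*k)) $$ (r,t) =
    (\<Sum>s<2*k. Dmat k e f $$ (r,s) * rGamma (of_int (int s - int t + 1)))"
  using assms by (simp add: scalar_prod_def rGamma_toeplitz_mat_def Dmat_def lessThan_atLeast0)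

lemma Dmat_mult_toeplitz_upper:
  assumes "r < k" "t < 2*k" "e (r+1) + int r = int a"
  shows "(Dmat k e f * rGamma_toeplitz_mat (2*k)) $$ (r,t) =
    (if a + t < 2*k then 2 ^ (2*k - 1 - a - t) / fact (2*k - 1 - a - t) else 0)"
proof -
  define u where "u = 2 * int k - (e (r+1) + int r)"
  define N where "N = nat (u - 1 - int t)"
  have "Dmat k e f $$ (r,s) = 1 * rGamma (of_int (u - int s))" if "s < 2*k" for s
    using that assms(1) by (simp add: Dmat_def u_def algebra_simps)
  then have "(Dmat k e f * rGamma_toeplitz_mat (2*k)) $$ (r,t) =
      (\<Sum>s<2*k. 1 * rGamma (of_int (u - int s)) * rGamma (of_int (int s - int t + 1)))"
    using assms by (simp add: Dmat_mult_toeplitz_entry)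
  also have "\<dots> = (if int t < u then \<Sum>j\<le>N. 1 * (inverse (fact (N - j)) * inverse (fact j)) else 0)"
    by (rule sum_rGamma_convolution) (use assms(3) in \<open>simp_all add: u_def N_def\<close>)
  also have "\<dots> = (if int t < u then 2 ^ N / fact N else 0)"
    by (simp only: mult_1 sum_inverse_fact_binomial)
  also have "\<dots> = (if a + t < 2*k then 2 ^ (2*k - 1 - a - t) / fact (2*k - 1 - a - t) else 0)"
    using assms(3) by (auto simp: u_def N_def nat_diff_distrib nat_mult_distrib)
  finally show ?thesis .
qed

lemma Dmat_mult_toeplitz_lower:
  assumes "i < k" "t < 2*k" "f (i+1) + int i = int b"
  shows "(Dmat k e f * rGamma_toeplitz_mat (2*k)) $$ (k+i,t) =
    (if t + b = 2*k - 1 then (-1)^(i+1+t) else 0)"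
proof -
  define u where "u = 2 * int k - (f (i+1) + int i)"
  have "Dmat k e f $$ (k+i,s) = (-1)^(i+1+s) * rGamma (of_int (u - int s))" if "s < 2*k" for s
  proof -
    have "(-1::real) powi (int i + 1 + int s) = (-1)^(i+1+s)"
      by (metis of_nat_1 of_nat_add power_int_of_nat)
    then show ?thesis using that assms(1) by (simp add: Dmat_def u_def algebra_simps)
  qed
  then have "(Dmat k e f * rGamma_toeplitz_mat (2*k)) $$ (k+i,t) =
      (\<Sum>s<2*k. (-1)^(i+1+s) * rGamma (of_int (u - int s)) * rGamma (of_int (int s - int t + 1)))"
    using assms by (simp add: Dmat_mult_toeplitz_entry)
  also have "\<dots> = (if int t < u then (-1)^(i+1+t) *
      (\<Sum>j\<le>nat (u - 1 - int t). (-1)^j * (inverse (fact (nat (u - 1 - int t) - j)) * inverse (fact j))) else 0)"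
    by (subst sum_rGamma_convolution[OF _ refl])
      (use assms(3) in \<open>auto simp: u_def sum_distrib_left power_add mult.assoc\<close>)
  also have "\<dots> = (if t + b = 2*k - 1 then (-1)^(i+1+t) else 0)"
    using assms(2,3) by (auto simp: sum_alternating_inverse_fact_binomial u_def)
  finally show ?thesis .
qed

locale Dmat_setting =
  fixes k :: nat and e f :: "nat \<Rightarrow> int" and c :: "nat \<Rightarrow> nat"
  assumes e_nonneg: "\<forall>i\<in>{1..k}. e i + int i - 1 \<ge> 0"
    and f_range: "\<forall>i\<in>{1..k}. 0 \<le> f i + int i - 1 \<and> f i + int i - 1 \<le> 2 * int k - 1"
    and f_inj: "inj_on (\<lambda>i. f i + int i - 1) {1..k}"
    and c_mono: "strict_mono_on {1..k} c"
    and c_image: "(\<lambda>j. int (c j)) ` {1..k} = {0..2 * int k - 1} - (\<lambda>i. f i + int i - 1) ` {1..k}"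
begin

definition e_shift :: "nat \<Rightarrow> nat" where "e_shift l = nat (e (l+1) + int l)"
definition f_shift :: "nat \<Rightarrow> nat" where "f_shift l = nat (f (l+1) + int l)"

lemma e_shift_eq:
  assumes "l < k" shows "int (e_shift l) = e (l+1) + int l"
proof -
  have "0 \<le> e (l+1) + int (l+1) - 1" using bspec[OF e_nonneg, of "l+1"] assms by simp
  then show ?thesis by (simp add: e_shift_def)
qed

lemma f_shift_eq_less:
  assumes "l < k" shows "int (f_shift l) = f (l+1) + int l" "f_shift l < 2*k"
proof -
  have "0 \<le> f (l+1) + int (l+1) - 1 \<and> f (l+1) + int (l+1) - 1 \<le> 2 * int k - 1"
    using bspec[OF f_range, of "l+1"] assms by simp
  then show "int (f_shift l) = f (l+1) + int l" "f_shift l < 2*k" by (auto simp: f_shift_def)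
qed

lemma inj_on_f_shift: "inj_on f_shift {0..<k}"
proof (rule inj_onI)
  fix x y assume "x \<in> {0..<k}" "y \<in> {0..<k}" "f_shift x = f_shift y"
  then have "(\<lambda>i. f i + int i - 1) (x+1) = (\<lambda>i. f i + int i - 1) (y+1)" "x+1 \<in> {1..k}" "y+1 \<in> {1..k}"
    using f_shift_eq_less(1)[of x] f_shift_eq_less(1)[of y] by auto
  then show "x = y" using inj_onD[OF f_inj] by fastforce
qed

lemma c_image_complement: "c ` {1..k} = {0..<2*k} - f_shift ` {0..<k}"
proof -
  have inj: "inj int" by (simp add: inj_def)
  have "int ` (c ` {1..k}) = int ` ({0..<2*k} - f_shift ` {0..<k})"
  proof -
    have "int ` {0..<2*k} = {0..2 * int k - 1}" 
      by (auto simp: image_iff intro!: bexI[of _ "nat x" for x])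
    moreover have "int ` f_shift ` {0..<k} = (\<lambda>i. f i + int i - 1) ` {1..k}"
    proof -
      have "int ` f_shift ` {0..<k} = (\<lambda>l. f (l+1) + int l) ` {0..<k}"
        using f_shift_eq_less(1) by (auto simp: image_comp)
      also have "\<dots> = (\<lambda>i. f i + int i - 1) ` Suc ` {0..<k}"
        unfolding image_comp by (simp add: comp_def del: image_Suc_atLeastLessThan)
      also have "Suc ` {0..<k} = {1..k}"
        by (simp add: atLeastLessThanSuc_atLeastAtMost)
      finally show ?thesis .
    qed
    ultimately show ?thesis
      using c_image by (simp add: image_set_diff[OF inj] image_comp comp_def)
  qed
  then show ?thesis by (simp add: inj_image_eq_iff[OF inj])
qed

lemma c_less: "j \<in> {1..k} \<Longrightarrow> c j < 2*k"
  using imageI[of j "{1..k}" c] unfolding c_image_complement by simp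

lemma prod_fact_f_shift_c: "(\<Prod>l<k. fact (f_shift l)) * (\<Prod>l<k. fact (c (l+1))) = (\<Prod>l<k. fact l * fact (k+l) :: real)"
proof -
  have "(\<Prod>l<k. fact l * fact (k+l) :: real) = (\<Prod>m\<in>{0..<2*k}. fact m)"
    using prod.atLeastLessThan_concat[of 0 k "2*k" "fact :: nat \<Rightarrow> real"]
      prod.atLeastLessThan_shift_0[of "fact :: nat \<Rightarrow> real" k "2*k"]
    by (simp add: prod.distrib atLeast0LessThan comp_def)
  also have "\<dots> = (\<Prod>m\<in>f_shift ` {0..<k} \<union> c ` {1..k}. fact m)"
    using c_image_complement f_shift_eq_less(2) by (intro prod.cong) auto
  also have "\<dots> = (\<Prod>m\<in>f_shift ` {0..<k}. fact m) * (\<Prod>m\<in>c ` {1..k}. fact m)"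
    using c_image_complement by (intro prod.union_disjoint) auto
  also have "\<dots> = (\<Prod>l<k. fact (f_shift l)) * (\<Prod>j\<in>Suc ` {..<k}. fact (c j))"
    using prod.reindex[OF inj_on_f_shift, of "fact :: nat \<Rightarrow> real"]
      prod.reindex[OF strict_mono_on_imp_inj_on[OF c_mono], of "fact :: nat \<Rightarrow> real"]
    by (simp add: atLeast0LessThan image_Suc_lessThan)
  finally show ?thesis by (simp add: prod.reindex)
qed

lemma prefactor_eq:
  "(\<Prod>l<k. (fact (nat (e (l+1) + int l)) * fact (nat (f (l+1) + int l)) / (fact l * fact (k + l))) *
      (2::real) powi (int (c (l+1)) - e (l+1) - int l)) =
    (\<Prod>l<k. fact (e_shift l) / 2 ^ e_shift l) * (\<Prod>l<k. 2 ^ c (l+1) / fact (c (l+1)))"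
proof -
  have "(fact (nat (e (l+1) + int l)) * fact (nat (f (l+1) + int l)) / (fact l * fact (k + l))) *
      (2::real) powi (int (c (l+1)) - e (l+1) - int l) =
    fact (e_shift l) / 2 ^ e_shift l * (2 ^ c (l+1) / fact (c (l+1))) *
      (fact (f_shift l) * fact (c (l+1)) / (fact l * fact (k+l)))" if "l < k" for l
  proof -
    have "(2::real) powi (int (c (l+1)) - e (l+1) - int l) = 2 powi (int (c (l+1)) - int (e_shift l))"
      using e_shift_eq[OF that] by (simp add: algebra_simps)
    also have "\<dots> = 2 ^ c (l+1) / 2 ^ e_shift l"
      by (simp add: power_int_diff power_int_of_nat)
    finally show ?thesis
      unfolding e_shift_def[symmetric] f_shift_def[symmetric] by (simp add: field_simps)
  qed
  then have "(\<Prod>l<k. (fact (nat (e (l+1) + int l)) * fact (nat (f (l+1) + int l)) / (fact l * fact (k + l))) *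
      (2::real) powi (int (c (l+1)) - e (l+1) - int l)) =
    (\<Prod>l<k. fact (e_shift l) / 2 ^ e_shift l) * (\<Prod>l<k. 2 ^ c (l+1) / fact (c (l+1))) *
      ((\<Prod>l<k. fact (f_shift l)) * (\<Prod>l<k. fact (c (l+1))) / (\<Prod>l<k. fact l * fact (k+l)))"
    by (simp add: prod.distrib prod_dividef)
  also have "(\<Prod>l<k. fact (f_shift l)) * (\<Prod>l<k. fact (c (l+1))) / (\<Prod>l<k. fact l * fact (k+l)) = (1::real)"
    unfolding prod_fact_f_shift_c by (simp add: prod_zero_iff)
  finally show ?thesis by simp
qed

end

locale Dmat_sorted = Dmat_setting +
  fixes \<pi> :: "nat \<Rightarrow> nat"
  assumes \<pi>_permutes: "\<pi> permutes {0..<k}"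
    and \<pi>_sorts: "strict_mono_on {0..<k} (f_shift \<circ> \<pi>)"
begin

(* The reversal makes the columns \<beta> i of the unit rows increase, as det_unit_rows requires;
   it reappears as the column reversal in Z_minor, so the two signs cancel. *)
definition \<tau> :: "nat \<Rightarrow> nat" where "\<tau> = \<pi> \<circ> reverse_perm k"
definition \<beta> :: "nat \<Rightarrow> nat" where "\<beta> i = 2*k - 1 - f_shift (\<tau> i)"
definition \<gamma> :: "nat \<Rightarrow> nat" where "\<gamma> j = 2*k - 1 - c (k - j)"

lemma \<tau>_permutes: "\<tau> permutes {0..<k}"
  unfolding \<tau>_def by (rule permutes_compose[OF reverse_perm_permutes \<pi>_permutes])

lemma \<tau>_less: "i < k \<Longrightarrow> \<tau> i < k"
  using permutes_in_image[OF \<tau>_permutes] by simp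

lemma f_shift_\<tau>_antimono:
  assumes "i < j" "j < k" shows "f_shift (\<tau> j) < f_shift (\<tau> i)"
  using strict_mono_onD[OF \<pi>_sorts, of "reverse_perm k j" "reverse_perm k i"] assms
  by (simp add: \<tau>_def reverse_perm_def)

lemma \<beta>_less: "i < k \<Longrightarrow> \<beta> i < 2*k"
  using f_shift_eq_less(2)[OF \<tau>_less] by (simp add: \<beta>_def)

lemma \<beta>_mono: "strict_mono_on {0..<k} \<beta>"
proof (rule strict_mono_onI)
  fix i j assume "i \<in> {0..<k}" "j \<in> {0..<k}" "i < j"
  then have "f_shift (\<tau> j) < f_shift (\<tau> i)" "f_shift (\<tau> i) < 2*k"
    using f_shift_\<tau>_antimono f_shift_eq_less(2)[OF \<tau>_less] by auto
  then show "\<beta> i < \<beta> j" by (simp add: \<beta>_def)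
qed

lemma \<gamma>_mono: "strict_mono_on {0..<k} \<gamma>"
proof (rule strict_mono_onI)
  fix i j assume "i \<in> {0..<k}" "j \<in> {0..<k}" "i < j"
  then have "c (k - j) < c (k - i)" "c (k - i) < 2*k"
    using strict_mono_onD[OF c_mono] c_less by auto
  then show "\<gamma> i < \<gamma> j" by (simp add: \<gamma>_def)
qed

lemma \<gamma>_image: "\<gamma> ` {0..<k} = {0..<2*k} - \<beta> ` {0..<k}"
proof -
  define R where "R x = 2*k - 1 - x" for x
  have inj_R: "inj_on R {0..<2*k}" by (auto simp: R_def inj_on_def)
  have R_image: "R ` {0..<2*k} = {0..<2*k}"
  proof (intro equalityI subsetI)
    fix x assume "x \<in> {0..<2*k}"
    then have "x = R (R x)" "R x \<in> {0..<2*k}" by (auto simp: R_def)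
    then show "x \<in> R ` {0..<2*k}" by blast
  qed (auto simp: R_def)
  have "\<gamma> ` {0..<k} = R ` c ` (\<lambda>j. k - j) ` {0..<k}"
    by (simp add: image_comp comp_def \<gamma>_def R_def)
  also have "(\<lambda>j. k - j) ` {0..<k} = {1..k}"
  proof (intro equalityI subsetI)
    fix x assume "x \<in> {1..k}"
    then have "x = k - (k - x)" "k - x \<in> {0..<k}" by auto
    then show "x \<in> (\<lambda>j. k - j) ` {0..<k}" by blast
  qed auto
  also have "c ` {1..k} = {0..<2*k} - f_shift ` {0..<k}"
    by (rule c_image_complement)
  also have "R ` \<dots> = {0..<2*k} - R ` f_shift ` {0..<k}"
  proof -
    have "f_shift ` {0..<k} \<subseteq> {0..<2*k}" using f_shift_eq_less(2) by auto
    then show ?thesis using inj_on_image_set_diff[OF inj_R, of "{0..<2*k}"] R_image by simp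
  qed
  also have "R ` f_shift ` {0..<k} = R ` f_shift ` \<tau> ` {0..<k}"
    using permutes_image[OF \<tau>_permutes] by simp
  also have "\<dots> = \<beta> ` {0..<k}"
    by (simp add: image_comp comp_def \<beta>_def[abs_def] R_def)
  finally show ?thesis .
qed

definition Y :: "real mat" where "Y = Dmat k e f * rGamma_toeplitz_mat (2*k)"
definition row_perm :: "nat \<Rightarrow> nat" where "row_perm = map_permutation {0..<k} ((+) k) \<tau>"
definition Z :: "real mat" where "Z = mat (2*k) (2*k) (\<lambda>(r,t). Y $$ (row_perm r, t))"

lemma Y_carrier: "Y \<in> carrier_mat (2*k) (2*k)"
  unfolding Y_def using Dmat_carrier rGamma_toeplitz_mat_carrier by (rule mult_carrier_mat)

lemma det_Y: "det Y = det (Dmat k e f)"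
  unfolding Y_def det_mult[OF Dmat_carrier rGamma_toeplitz_mat_carrier] det_rGamma_toeplitz_mat by simp

lemma row_perm_permutes: "row_perm permutes {k..<2*k}"
proof -
  have "bij_betw ((+) k) {0..<k} {k..<2*k}"
    by (simp add: bij_betw_def inj_on_def mult_2)
  then show ?thesis
    unfolding row_perm_def by (rule map_permutation_permutes[OF _ \<tau>_permutes])
qed

lemma row_perm_upper: "r < k \<Longrightarrow> row_perm r = r"
  using permutes_not_in[OF row_perm_permutes] by simp

lemma row_perm_lower: "i < k \<Longrightarrow> row_perm (k + i) = k + \<tau> i"
  unfolding row_perm_def by (rule map_permutation_apply) auto

lemma det_Z: "det Z = of_int (sign \<tau>) * det Y"
proof -
  have "row_perm permutes {0..<2*k}" by (rule permutes_subset[OF row_perm_permutes]) auto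
  moreover have "sign row_perm = sign \<tau>"
    unfolding row_perm_def by (rule sign_map_permutation[OF _ \<tau>_permutes]) auto
  ultimately show ?thesis
    unfolding Z_def using det_permute_rows[OF Y_carrier] by simp
qed

lemma Z_lower:
  assumes "i < k" "t < 2*k"
  shows "Z $$ (k+i, t) = (if t = \<beta> i then (-1)^(\<tau> i + 1 + \<beta> i) else 0)"
proof -
  have "Z $$ (k+i, t) = Y $$ (k + \<tau> i, t)"
    using assms by (simp add: Z_def row_perm_lower)
  also have "\<dots> = (if t + f_shift (\<tau> i) = 2*k - 1 then (-1)^(\<tau> i + 1 + t) else 0)"
    unfolding Y_def using \<tau>_less[OF assms(1)] assms(2) f_shift_eq_less(1)
    by (intro Dmat_mult_toeplitz_lower) auto
  also have "\<dots> = (if t = \<beta> i then (-1)^(\<tau> i + 1 + \<beta> i) else 0)"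
    using f_shift_eq_less(2)[OF \<tau>_less[OF assms(1)]] by (auto simp: \<beta>_def)
  finally show ?thesis .
qed

definition binom_mat :: "real mat" where
  "binom_mat = mat k k (\<lambda>(a,b). real (c (b+1) choose nat (e (a+1) + int (a+1) - 1)))"

definition scaled_binom_mat :: "real mat" where
  "scaled_binom_mat = mat k k (\<lambda>(r,j).
     fact (e_shift r) / 2 ^ e_shift r * (2 ^ c (j+1) / fact (c (j+1))) * binom_mat $$ (r,j))"

lemma Z_minor:
  "mat k k (\<lambda>(r,j). Z $$ (r, \<gamma> j)) = mat k k (\<lambda>(r,j). scaled_binom_mat $$ (r, reverse_perm k j))"
    (is "?M = ?N")
proof (rule eq_matI)
  fix r j assume "r < dim_row ?N" "j < dim_col ?N"
  then have r: "r < k" and j: "j < k" by auto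
  define C where "C = c (k - j)"
  have C: "C < 2*k" "\<gamma> j = 2*k - 1 - C" using c_less[of "k - j"] j by (auto simp: C_def \<gamma>_def)
  have "Z $$ (r, \<gamma> j) = Y $$ (r, \<gamma> j)"
    using r C by (simp add: Z_def row_perm_upper)
  also have "\<dots> = (if e_shift r + \<gamma> j < 2*k then 2 ^ (2*k - 1 - e_shift r - \<gamma> j) /
      fact (2*k - 1 - e_shift r - \<gamma> j) else 0)"
    unfolding Y_def using C r e_shift_eq[OF r] by (intro Dmat_mult_toeplitz_upper) simp_all
  also have "\<dots> = (if e_shift r \<le> C then 2 ^ (C - e_shift r) / fact (C - e_shift r) else 0)"
  proof -
    have "e_shift r + \<gamma> j < 2*k \<longleftrightarrow> e_shift r \<le> C" "2*k - 1 - e_shift r - \<gamma> j = C - e_shift r"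
      using C by auto
    then show ?thesis by (simp only:)
  qed
  also have "\<dots> = fact (e_shift r) / 2 ^ e_shift r * (2 ^ C / fact C) * real (C choose e_shift r)"
    using power_div_fact_diff_eq_binomial[of 2] by simp
  also have "\<dots> = scaled_binom_mat $$ (r, reverse_perm k j)"
    using r j by (simp add: scaled_binom_mat_def binom_mat_def reverse_perm_def C_def e_shift_def Suc_diff_Suc)
  finally show "?M $$ (r, j) = ?N $$ (r, j)" using r j by simp
qed auto

lemma det_scaled_binom_mat:
  "det scaled_binom_mat =
    (\<Prod>l<k. fact (e_shift l) / 2 ^ e_shift l) * (\<Prod>l<k. 2 ^ c (l+1) / fact (c (l+1))) * det binom_mat"
  unfolding scaled_binom_mat_def by (rule det_scale_rows_cols) (simp add: binom_mat_def)

lemma det_Z_expand: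
  "det Z = (-1)^(\<Sum>i<k. k + i + \<beta> i) * (\<Prod>i<k. (-1)^(\<tau> i + 1 + \<beta> i)) *
    det (mat k k (\<lambda>(r,j). Z $$ (r, \<gamma> j)))"
proof (rule det_unit_rows)
  show "Z \<in> carrier_mat (k + k) (k + k)" by (simp add: Z_def mult_2)
  show "\<beta> ` {0..<k} \<subseteq> {0..<k + k}" using \<beta>_less by (auto simp: mult_2)
  show "\<gamma> ` {0..<k} = {0..<k + k} - \<beta> ` {0..<k}" using \<gamma>_image by (simp add: mult_2)
qed (use \<beta>_mono \<gamma>_mono Z_lower in \<open>auto simp: mult_2\<close>)

lemma unit_rows_sign: "(-1::real)^(\<Sum>i<k. k + i + \<beta> i) * (\<Prod>i<k. (-1)^(\<tau> i + 1 + \<beta> i)) = 1"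
proof -
  have "(\<Sum>i<k. \<tau> i) = (\<Sum>i<k. i)"
    using sum.permute[OF \<tau>_permutes, of "\<lambda>i. i"] by (simp add: atLeast0LessThan)
  then have "(\<Sum>i<k. k + i + \<beta> i) + (\<Sum>i<k. \<tau> i + 1 + \<beta> i) =
      k * (k + 1) + 2 * ((\<Sum>i<k. i) + (\<Sum>i<k. \<beta> i))"
    by (simp only: sum.distrib) (simp add: algebra_simps)
  then have "even ((\<Sum>i<k. k + i + \<beta> i) + (\<Sum>i<k. \<tau> i + 1 + \<beta> i))" by simp
  then have "(-1::real) ^ ((\<Sum>i<k. k + i + \<beta> i) + (\<Sum>i<k. \<tau> i + 1 + \<beta> i)) = 1" by simp
  then show ?thesis by (simp only: power_add power_sum)
qed

theorem det_Dmat: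
  "det (Dmat k e f) = of_int (sign \<pi>) *
    ((\<Prod>l<k. fact (e_shift l) / 2 ^ e_shift l) * (\<Prod>l<k. 2 ^ c (l+1) / fact (c (l+1))) * det binom_mat)"
proof -
  have sign_\<tau>: "sign \<tau> = sign \<pi> * sign (reverse_perm k)"
    unfolding \<tau>_def using \<pi>_permutes reverse_perm_permutes
    by (intro sign_compose) (auto intro: permutes_imp_permutation)
  have "(of_int (sign \<tau>) :: real) * of_int (sign \<tau>) = 1"
    by (simp flip: of_int_mult)
  then have "det (Dmat k e f) = of_int (sign \<tau>) * det Z"
    unfolding det_Z det_Y[symmetric] by (subst mult.assoc[symmetric]) simp
  also have "\<dots> = of_int (sign \<tau>) * (of_int (sign (reverse_perm k)) * det scaled_binom_mat)"
    unfolding det_Z_expand unit_rows_sign Z_minor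
    using det_permute_cols[OF _ reverse_perm_permutes, of scaled_binom_mat] by (simp add: scaled_binom_mat_def)
  also have "\<dots> = of_int (sign \<pi> * (sign (reverse_perm k) * sign (reverse_perm k))) * det scaled_binom_mat"
    unfolding sign_\<tau> by (simp only: of_int_mult ac_simps)
  also have "\<dots> = of_int (sign \<pi>) * det scaled_binom_mat"
    by (simp only: sign_idempotent mult_1_right)
  finally show ?thesis unfolding det_scaled_binom_mat .
qed

lemma sort_perm_eq: "sort_perm (\<lambda>i. f i + int i) k = map_permutation {0..<k} Suc \<pi>"
proof (rule sort_perm_eqI)
  have "bij_betw Suc {0..<k} {1..k}"
    by (simp add: bij_betw_def atLeastLessThanSuc_atLeastAtMost)
  then show "map_permutation {0..<k} Suc \<pi> permutes {1..k}"
    by (rule map_permutation_permutes[OF _ \<pi>_permutes])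
  have shift: "((\<lambda>i. f i + int i) \<circ> map_permutation {0..<k} Suc \<pi>) (Suc l) = int (f_shift (\<pi> l)) + 1"
    if "l < k" for l
  proof -
    have "map_permutation {0..<k} Suc \<pi> (Suc l) = Suc (\<pi> l)"
      using that by (intro map_permutation_apply) auto
    then show ?thesis
      using f_shift_eq_less(1)[of "\<pi> l"] permutes_in_image[OF \<pi>_permutes, of l] that by simp
  qed
  show "strict_mono_on {1..k} ((\<lambda>i. f i + int i) \<circ> map_permutation {0..<k} Suc \<pi>)"
  proof (intro strict_mono_onI)
    fix i j :: nat assume "i \<in> {1..k}" "j \<in> {1..k}" "i < j"
    then have ij: "i = Suc (i - 1)" "j = Suc (j - 1)" "i - 1 < j - 1" "j - 1 < k" by auto
    then have "f_shift (\<pi> (i - 1)) < f_shift (\<pi> (j - 1))"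
      using strict_mono_onD[OF \<pi>_sorts, of "i - 1" "j - 1"] by simp
    with ij show "((\<lambda>i. f i + int i) \<circ> map_permutation {0..<k} Suc \<pi>) i <
        ((\<lambda>i. f i + int i) \<circ> map_permutation {0..<k} Suc \<pi>) j"
      using shift[of "i - 1"] shift[of "j - 1"] by simp
  qed
qed

end

theorem lemma6:
  fixes k :: nat and e f :: "nat \<Rightarrow> int" and c :: "nat \<Rightarrow> nat"
  assumes "k \<ge> 1"
    and "\<forall>i\<in>{1..k}. e i + int i - 1 \<ge> 0"
    and "inj_on (\<lambda>i. e i + int i - 1) {1..k}"
    and "\<forall>i\<in>{1..k}. 0 \<le> f i + int i - 1 \<and> f i + int i - 1 \<le> 2 * int k - 1"
    and "inj_on (\<lambda>i. f i + int i - 1) {1..k}"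
    and "strict_mono_on {1..k} c"
    and "(\<lambda>j. int (c j)) ` {1..k} = {0..2 * int k - 1} - (\<lambda>i. f i + int i - 1) ` {1..k}"
  shows "det (Dmat k e f) =
    of_int (sign (sort_perm (\<lambda>i. f i + int i) k)) *
    (\<Prod>l<k. (fact (nat (e (l+1) + int l)) * fact (nat (f (l+1) + int l))
              / (fact l * fact (k + l))) *
            (2::real) powi (int (c (l+1)) - e (l+1) - int l)) *
    det (mat k k (\<lambda>(a,b). real (c (b+1) choose nat (e (a+1) + int (a+1) - 1))))"
proof -
  interpret Dmat_setting k e f c
    by (rule Dmat_setting.intro[OF assms(2) assms(4-7)])
  obtain \<pi> where "\<pi> permutes {0..<k}" "strict_mono_on {0..<k} (f_shift \<circ> \<pi>)"
    using sorting_permutation_exists[OF inj_on_f_shift] by blast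
  then interpret Dmat_sorted k e f c \<pi>
    by unfold_locales
  have "sign (sort_perm (\<lambda>i. f i + int i) k) = sign \<pi>"
    unfolding sort_perm_eq by (rule sign_map_permutation[OF _ \<pi>_permutes]) auto
  then show ?thesis
    using det_Dmat prefactor_eq by (simp add: binom_mat_def)
qed

end
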